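(* Consider two trains on a single shared track through three consecutive stations $A,B,C$, with all event times given by a dispatching timetable $t$ (i.e. $t_e=\pi_e+x_e$ is the rescheduled time of event $e$). Train 1 has departure event $u$ at $A$, arrival event $v$ at $B$, departure event $w$ at $B$, and arrival event $z$ at $C$. Train 2 runs in the opposite direction, with departure event $u'$ at $C$, arrival event $v'$ at $B$, departure event $w'$ at $B$, and arrival event $z'$ at $A$. Assume all of these trips and both waiting activities $(v,w)$ and $(v',w')$ are part of the solution, so that the following constraints hold, with real constants $S$ (safety margin), $0\le L^{min}_{vw}$, $0\le L^{min}_{v'w'}$ and $0\le L^{min}_{a}\le L^{max}_{a}$ for each driving activity $a\in\{(u,v),(w,z),(u',v'),(w',z')\}$: (1) Driving times: $L^{min}_{a}\le t_{\text{head}(a)}-t_{\text{tail}(a)}\le L^{max}_{a}$ for each of the four driving activities $a$. (2) Waiting times: $t_w-t_v\ge L^{min}_{vw}$ and $t_{w'}-t_{v'}\ge L^{min}_{v'w'}$. (3) Track $A$–$B$: binaries $g_{uw'},g_{w'u}\in\{0,1\}$ with $g_{uw'}+g_{w'u}=1$; if $g_{uw'}=1$ then $t_{w'}\ge t_u+L^{max}_{uv}+S$; if $g_{w'u}=1$ then $t_u\ge t_{w'}+L^{max}_{w'z'}+S$. (4) Track $B$–$C$: binaries $g_{wu'},g_{u'w}\in\{0,1\}$ with $g_{wu'}+g_{u'w}=1$; if $g_{wu'}=1$ then $t_{u'}\ge t_w+L^{max}_{wz}+S$; if $g_{u'w}=1$ then $t_w\ge t_{u'}+L^{max}_{u'v'}+S$.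 (5) Platform at $B$: binaries $h_{vv'},h_{v'v}\in\{0,1\}$ with $h_{vv'}+h_{v'v}=1$; if $h_{vv'}=1$ then $t_{v'}\ge t_w+S$; if $h_{v'v}=1$ then $t_v\ge t_{w'}+S$. If the safety margin satisfies $$S>\tfrac12\max\{L^{max}_{wz}-L^{min}_{wz},\;L^{max}_{uv}-L^{min}_{uv}\},$$ then $g_{uw'}=h_{vv'}=g_{wu'}$.
   Context: This models a railway event-activity network: events are departures and arrivals of trains at stations with scheduled times $\pi_e$ and delays $x_e\ge 0$; driving activities connect a departure to the next arrival, waiting activities connect an arrival at a station to the subsequent departure of the same train from that station. Headway binaries $g$ on a shared track encode which of two conflicting departures uses the track first (for opposite directions the second train must wait for the maximal transit time $L^{max}$ of the first trip plus the safety margin $S$), and platform binaries $h$ encode which train occupies the shared platform at $B$ first ($h_{vv'}=1$ meaning train 1 departs from $B$ at least $S$ before train 2 arrives at $B$). The constraints (1)–(5) listed in the claim are exactly those of the integer program that apply when all involved activities are active. *)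

theory Defs
  imports Complex_Main
begin

end

theory Submission
  imports Defs
begin

(* Every decision variable of the dispatching model says in which
   order two events at the middle station B happen, so each of them is the indicator of
   an ordering of timetable values:
     - g_uw' and h_vv' are the indicator of  t v < t w'  (train 1 reaches B before
       train 2 leaves B),
     - g_wu' and h_vv' are the indicator of  t w < t v'  (train 1 leaves B before
       train 2 reaches B).
   Since h_vv' occurs in both lists, the two orderings coincide and all three variables
   are equal.  The general fact used four times is that a pair of complementary binaries,
   each of which forces one outcome of a dichotomy P, is the indicator of P.  The
   orderings follow from the time windows by linear arithmetic, using only S > 0; the
   assumed bound on S implies S > 0 because every minimal driving time is at most the
   corresponding maximal one. *)

lemma complementary_binaries_indicator:
  fixes a b :: int
  assumes "a \<in> {0, 1}" "b \<in> {0, 1}" "a + b = 1"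
    and "a = 1 \<longrightarrow> P" "b = 1 \<longrightarrow> \<not> P"
  shows "a = of_bool P"
  using assms by auto

theorem lemma1:
  fixes t :: "'e \<Rightarrow> real"
    and u v w z u' v' w' z' :: 'e
    and S Lmin_uv Lmax_uv Lmin_wz Lmax_wz Lmin_u'v' Lmax_u'v' Lmin_w'z' Lmax_w'z'
        Lmin_vw Lmin_v'w' :: real
    and g_uw' g_w'u g_wu' g_u'w h_vv' h_v'v :: int
  assumes par_wait: "0 \<le> Lmin_vw" "0 \<le> Lmin_v'w'"
    and par_uv: "0 \<le> Lmin_uv" "Lmin_uv \<le> Lmax_uv"
    and par_wz: "0 \<le> Lmin_wz" "Lmin_wz \<le> Lmax_wz"
    and par_u'v': "0 \<le> Lmin_u'v'" "Lmin_u'v' \<le> Lmax_u'v'"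
    and par_w'z': "0 \<le> Lmin_w'z'" "Lmin_w'z' \<le> Lmax_w'z'"
    \<comment> \<open>(1) driving times\<close>
    and drive_uv: "Lmin_uv \<le> t v - t u" "t v - t u \<le> Lmax_uv"
    and drive_wz: "Lmin_wz \<le> t z - t w" "t z - t w \<le> Lmax_wz"
    and drive_u'v': "Lmin_u'v' \<le> t v' - t u'" "t v' - t u' \<le> Lmax_u'v'"
    and drive_w'z': "Lmin_w'z' \<le> t z' - t w'" "t z' - t w' \<le> Lmax_w'z'"
    \<comment> \<open>(2) waiting times\<close>
    and wait: "t w - t v \<ge> Lmin_vw" "t w' - t v' \<ge> Lmin_v'w'"
    \<comment> \<open>(3) track A--B\<close>
    and trackAB: "g_uw' \<in> {0, 1}" "g_w'u \<in> {0, 1}" "g_uw' + g_w'u = 1"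
      "g_uw' = 1 \<longrightarrow> t w' \<ge> t u + Lmax_uv + S"
      "g_w'u = 1 \<longrightarrow> t u \<ge> t w' + Lmax_w'z' + S"
    \<comment> \<open>(4) track B--C\<close>
    and trackBC: "g_wu' \<in> {0, 1}" "g_u'w \<in> {0, 1}" "g_wu' + g_u'w = 1"
      "g_wu' = 1 \<longrightarrow> t u' \<ge> t w + Lmax_wz + S"
      "g_u'w = 1 \<longrightarrow> t w \<ge> t u' + Lmax_u'v' + S"
    \<comment> \<open>(5) platform at B\<close>
    and platB: "h_vv' \<in> {0, 1}" "h_v'v \<in> {0, 1}" "h_vv' + h_v'v = 1"
      "h_vv' = 1 \<longrightarrow> t v' \<ge> t w + S"
      "h_v'v = 1 \<longrightarrow> t v \<ge> t w' + S"
    and S_bound: "S > max (Lmax_wz - Lmin_wz) (Lmax_uv - Lmin_uv) / 2"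
  shows "g_uw' = h_vv' \<and> h_vv' = g_wu'"
proof -
  have S_pos: "S > 0"
    using S_bound par_uv par_wz by (auto simp: max_def split: if_splits)
  have trackAB_order: "g_uw' = of_bool (t v < t w')"
  proof (rule complementary_binaries_indicator[OF trackAB(1-3)])
    show "g_uw' = 1 \<longrightarrow> t v < t w'" using trackAB(4) drive_uv S_pos by linarith
    show "g_w'u = 1 \<longrightarrow> \<not> t v < t w'" using trackAB(5) drive_uv par_uv par_w'z' S_pos by linarith
  qed
  have platB_arrival_order: "h_vv' = of_bool (t v < t w')"
  proof (rule complementary_binaries_indicator[OF platB(1-3)])
    show "h_vv' = 1 \<longrightarrow> t v < t w'" using platB(4) wait par_wait S_pos by linarith
    show "h_v'v = 1 \<longrightarrow> \<not> t v < t w'" using platB(5) S_pos by linarith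
  qed
  have platB_departure_order: "h_vv' = of_bool (t w < t v')"
  proof (rule complementary_binaries_indicator[OF platB(1-3)])
    show "h_vv' = 1 \<longrightarrow> t w < t v'" using platB(4) S_pos by linarith
    show "h_v'v = 1 \<longrightarrow> \<not> t w < t v'" using platB(5) wait par_wait S_pos by linarith
  qed
  have trackBC_order: "g_wu' = of_bool (t w < t v')"
  proof (rule complementary_binaries_indicator[OF trackBC(1-3)])
    show "g_wu' = 1 \<longrightarrow> t w < t v'" using trackBC(4) drive_u'v' par_wz par_u'v' S_pos by linarith
    show "g_u'w = 1 \<longrightarrow> \<not> t w < t v'" using trackBC(5) drive_u'v' S_pos by linarith
  qed
  show ?thesis
    using trackAB_order platB_arrival_order platB_departure_order trackBC_order by simp
qed

end
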